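(* Let $k\ge 0$. If $V$ is a point configuration with $\mathrm{Th}(V)\le k$ and $H$ is a supporting hyperplane of $V$, then $\mathrm{Th}(V\cap H)\le k$. Likewise, if $\mathrm{Lev}(V)\le k$ then $\mathrm{Lev}(V\cap H)\le k$.
   Context: A point configuration is a finite set $V\subset\mathbb{R}^n$. A linear function means an affine function $\ell(x)=\delta-\langle c,x\rangle$. A supporting hyperplane of $V$ is a hyperplane $H=\{x:g(x)=0\}$ with $g$ a linear function nonnegative on $V$. A linear function $\ell$ nonnegative on $V$ is $k$-sos with respect to $V$ if there are polynomials $h_1,\dots,h_s$ with $\deg h_i\le k$ and $\ell(v)=\sum_i h_i(v)^2$ for all $v\in V$. The Theta rank $\mathrm{Th}(V)$ is the smallest $k\ge0$ such that every linear function nonnegative on $V$ is $k$-sos with respect to $V$. For $\ell$ nonnegative on $V$, $\{v\in V:\ell(v)=0\}$ is a face of $V$; inclusion-maximal faces different from $V$ are facets and the corresponding $\ell$ facet-defining. $V$ is $k$-level if every facet-defining linear function takes at most $k$ distinct values on $V$; the levelness $\mathrm{Lev}(V)$ is the smallest such $k$. *)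

theory Defs
  imports "HOL-Analysis.Analysis"
begin

definition monomial_fun :: "('n::finite \<Rightarrow> nat) \<Rightarrow> real^'n \<Rightarrow> real" where
  "monomial_fun \<alpha> x = (\<Prod>i\<in>UNIV. (x $ i) ^ (\<alpha> i))"

definition poly_fun_deg_le :: "nat \<Rightarrow> (real^'n::finite \<Rightarrow> real) \<Rightarrow> bool" where
  "poly_fun_deg_le k h \<longleftrightarrow>
     (\<exists>coef :: ('n \<Rightarrow> nat) \<Rightarrow> real.
        finite {\<alpha>. coef \<alpha> \<noteq> 0} \<and>
        (\<forall>\<alpha>. coef \<alpha> \<noteq> 0 \<longrightarrow> (\<Sum>i\<in>UNIV. \<alpha> i) \<le> k) \<and>
        h = (\<lambda>x. \<Sum>\<alpha>\<in>{\<alpha>. coef \<alpha> \<noteq> 0}. coef \<alpha> * monomial_fun \<alpha> x))"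

definition lin_fun :: "real \<Rightarrow> real^'n::finite \<Rightarrow> real^'n \<Rightarrow> real" where
  "lin_fun \<delta> c x = \<delta> - c \<bullet> x"

definition nonneg_on :: "(real^'n::finite) set \<Rightarrow> (real^'n \<Rightarrow> real) \<Rightarrow> bool" where
  "nonneg_on V l \<longleftrightarrow> (\<forall>v\<in>V. 0 \<le> l v)"

definition k_sos :: "nat \<Rightarrow> (real^'n::finite) set \<Rightarrow> (real^'n \<Rightarrow> real) \<Rightarrow> bool" where
  "k_sos k V l \<longleftrightarrow>
     (\<exists>hs :: (real^'n \<Rightarrow> real) list.
        (\<forall>h\<in>set hs. poly_fun_deg_le k h) \<and>
        (\<forall>v\<in>V. l v = (\<Sum>h\<leftarrow>hs. (h v)\<^sup>2)))"

definition theta_rank :: "(real^'n::finite) set \<Rightarrow> nat" where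
  "theta_rank V = (LEAST k. \<forall>\<delta> c. nonneg_on V (lin_fun \<delta> c) \<longrightarrow> k_sos k V (lin_fun \<delta> c))"

definition face_of_config :: "(real^'n::finite) set \<Rightarrow> (real^'n) set \<Rightarrow> bool" where
  "face_of_config V F \<longleftrightarrow>
     (\<exists>\<delta> c. nonneg_on V (lin_fun \<delta> c) \<and> F = {v\<in>V. lin_fun \<delta> c v = 0})"

definition facet_of_config :: "(real^'n::finite) set \<Rightarrow> (real^'n) set \<Rightarrow> bool" where
  "facet_of_config V F \<longleftrightarrow>
     face_of_config V F \<and> F \<noteq> V \<and>
     (\<forall>G. face_of_config V G \<and> G \<noteq> V \<and> F \<subseteq> G \<longrightarrow> G = F)"

definition facet_defining :: "(real^'n::finite) set \<Rightarrow> real \<Rightarrow> real^'n \<Rightarrow> bool" where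
  "facet_defining V \<delta> c \<longleftrightarrow>
     nonneg_on V (lin_fun \<delta> c) \<and> facet_of_config V {v\<in>V. lin_fun \<delta> c v = 0}"

definition k_level :: "nat \<Rightarrow> (real^'n::finite) set \<Rightarrow> bool" where
  "k_level k V \<longleftrightarrow>
     (\<forall>\<delta> c. facet_defining V \<delta> c \<longrightarrow> card (lin_fun \<delta> c ` V) \<le> k)"

definition levelness :: "(real^'n::finite) set \<Rightarrow> nat" where
  "levelness V = (LEAST k. k_level k V)"

end

theory Submission
  imports Defs
begin

text \<open>A nonnegative linear function on a face \<open>W = {v \<in> V. g v = 0}\<close> of a finite point
configuration extends to one on \<open>V\<close> by adding a large multiple of \<open>g\<close>; this keeps both its values
and its zero set on \<open>W\<close>. Hence sum-of-squares certificates on \<open>V\<close> restrict to \<open>W\<close>, giving the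
bound on the Theta rank. For the levelness, a facet \<open>F\<close> of \<open>W\<close> is the trace on \<open>W\<close> of a facet
\<open>G\<close> of \<open>V\<close> (a maximal face of \<open>V\<close> with trace \<open>F\<close>), and any two nonnegative linear functions
cutting out the same facet of a finite configuration are positive multiples of each other on it.
So the facet-defining function of \<open>F\<close> takes no more values on \<open>W\<close> than that of \<open>G\<close> does on
\<open>V\<close>.\<close>

lemma poly_fun_deg_le_iff:
  "poly_fun_deg_le k h \<longleftrightarrow>
     (\<exists>S d. finite S \<and> (\<forall>\<alpha>\<in>S. (\<Sum>i\<in>UNIV. \<alpha> i) \<le> k) \<and>
            h = (\<lambda>x. \<Sum>\<alpha>\<in>S. d \<alpha> * monomial_fun \<alpha> x))"
proof
  assume "poly_fun_deg_le k h"
  then show "\<exists>S d. finite S \<and> (\<forall>\<alpha>\<in>S. (\<Sum>i\<in>UNIV. \<alpha> i) \<le> k) \<and>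
               h = (\<lambda>x. \<Sum>\<alpha>\<in>S. d \<alpha> * monomial_fun \<alpha> x)"
    unfolding poly_fun_deg_le_def by blast
next
  assume "\<exists>S d. finite S \<and> (\<forall>\<alpha>\<in>S. (\<Sum>i\<in>UNIV. \<alpha> i) \<le> k) \<and>
            h = (\<lambda>x. \<Sum>\<alpha>\<in>S. d \<alpha> * monomial_fun \<alpha> x)"
  then obtain S d where S: "finite S" "\<forall>\<alpha>\<in>S. (\<Sum>i\<in>UNIV. \<alpha> i) \<le> k"
    and h: "h = (\<lambda>x. \<Sum>\<alpha>\<in>S. d \<alpha> * monomial_fun \<alpha> x)"
    by blast
  define coef where "coef \<alpha> = (if \<alpha> \<in> S then d \<alpha> else 0)" for \<alpha>
  have supp: "{\<alpha>. coef \<alpha> \<noteq> 0} \<subseteq> S"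
    by (auto simp: coef_def split: if_splits)
  have "h x = (\<Sum>\<alpha>\<in>{\<alpha>. coef \<alpha> \<noteq> 0}. coef \<alpha> * monomial_fun \<alpha> x)" for x
    unfolding h by (rule sum.mono_neutral_cong_right[OF S(1) supp]) (auto simp: coef_def)
  then show "poly_fun_deg_le k h"
    unfolding poly_fun_deg_le_def
    using supp S finite_subset by (intro exI[of _ coef]) auto
qed

lemma poly_fun_deg_le_mono:
  assumes "k \<le> k'" "poly_fun_deg_le k h"
  shows "poly_fun_deg_le k' h"
  using assms unfolding poly_fun_deg_le_iff by fastforce

lemma poly_fun_deg_le_monomial:
  assumes "(\<Sum>i\<in>UNIV. \<gamma> i) \<le> k"
  shows "poly_fun_deg_le k (\<lambda>x. a * monomial_fun \<gamma> x)"
  unfolding poly_fun_deg_le_iff using assms by (intro exI[of _ "{\<gamma>}"] exI[of _ "\<lambda>_. a"]) simp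

lemma poly_fun_deg_le_const: "poly_fun_deg_le k (\<lambda>x. a)"
  using poly_fun_deg_le_monomial[of "\<lambda>_. 0" k a] by (simp add: monomial_fun_def)

lemma poly_fun_deg_le_coord: "poly_fun_deg_le 1 (\<lambda>x::real^'n. x $ i)"
proof -
  have "monomial_fun (\<lambda>j. if j = i then 1 else 0) x = x $ i" for x :: "real^'n"
    unfolding monomial_fun_def by (simp add: if_distrib prod.delta cong: if_cong)
  then show ?thesis
    using poly_fun_deg_le_monomial[of "\<lambda>j. if j = i then 1 else 0" 1 1] by simp
qed

lemma poly_fun_deg_le_add:
  assumes "poly_fun_deg_le k f" "poly_fun_deg_le k g"
  shows "poly_fun_deg_le k (\<lambda>x. f x + g x)"
proof -
  obtain Sf df where f: "finite Sf" "\<forall>\<alpha>\<in>Sf. (\<Sum>i\<in>UNIV. \<alpha> i) \<le> k"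
    "f = (\<lambda>x. \<Sum>\<alpha>\<in>Sf. df \<alpha> * monomial_fun \<alpha> x)"
    using assms(1) unfolding poly_fun_deg_le_iff by blast
  obtain Sg dg where g: "finite Sg" "\<forall>\<alpha>\<in>Sg. (\<Sum>i\<in>UNIV. \<alpha> i) \<le> k"
    "g = (\<lambda>x. \<Sum>\<alpha>\<in>Sg. dg \<alpha> * monomial_fun \<alpha> x)"
    using assms(2) unfolding poly_fun_deg_le_iff by blast
  define d where "d \<alpha> = (if \<alpha> \<in> Sf then df \<alpha> else 0) + (if \<alpha> \<in> Sg then dg \<alpha> else 0)" for \<alpha>
  have "(\<Sum>\<alpha>\<in>Sf \<union> Sg. (if \<alpha> \<in> Sf then df \<alpha> else 0) * monomial_fun \<alpha> x) = f x"
    "(\<Sum>\<alpha>\<in>Sf \<union> Sg. (if \<alpha> \<in> Sg then dg \<alpha> else 0) * monomial_fun \<alpha> x) = g x" for x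
    unfolding f(3) g(3) by (rule sum.mono_neutral_cong_right; use f g in auto)+
  then have "(\<lambda>x. f x + g x) = (\<lambda>x. \<Sum>\<alpha>\<in>Sf \<union> Sg. d \<alpha> * monomial_fun \<alpha> x)"
    by (simp add: d_def distrib_right sum.distrib)
  then show ?thesis
    unfolding poly_fun_deg_le_iff using f g by blast
qed

lemma poly_fun_deg_le_sum:
  assumes "finite I" "\<forall>i\<in>I. poly_fun_deg_le k (f i)"
  shows "poly_fun_deg_le k (\<lambda>x. \<Sum>i\<in>I. f i x)"
  using assms
proof (induction I rule: finite_induct)
  case empty
  then show ?case by (simp add: poly_fun_deg_le_const)
next
  case (insert i I)
  then show ?case by (simp add: poly_fun_deg_le_add)
qed

lemma poly_fun_deg_le_cmult:
  assumes "poly_fun_deg_le k f"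
  shows "poly_fun_deg_le k (\<lambda>x. a * f x)"
proof -
  obtain S d where f: "finite S" "\<forall>\<alpha>\<in>S. (\<Sum>i\<in>UNIV. \<alpha> i) \<le> k"
    "f = (\<lambda>x. \<Sum>\<alpha>\<in>S. d \<alpha> * monomial_fun \<alpha> x)"
    using assms unfolding poly_fun_deg_le_iff by blast
  have "(\<lambda>x. a * f x) = (\<lambda>x. \<Sum>\<alpha>\<in>S. (a * d \<alpha>) * monomial_fun \<alpha> x)"
    by (simp add: f(3) sum_distrib_left mult.assoc)
  then show ?thesis
    unfolding poly_fun_deg_le_iff using f(1,2) by (intro exI[of _ S] exI[of _ "\<lambda>\<alpha>. a * d \<alpha>"]) simp
qed

lemma monomial_fun_add: "monomial_fun (\<lambda>i. \<alpha> i + \<beta> i) x = monomial_fun \<alpha> x * monomial_fun \<beta> x"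
  unfolding monomial_fun_def by (simp add: power_add prod.distrib)

lemma poly_fun_deg_le_mult:
  assumes "poly_fun_deg_le a f" "poly_fun_deg_le b g"
  shows "poly_fun_deg_le (a + b) (\<lambda>x. f x * g x)"
proof -
  obtain Sf df where f: "finite Sf" "\<forall>\<alpha>\<in>Sf. (\<Sum>i\<in>UNIV. \<alpha> i) \<le> a"
    "f = (\<lambda>x. \<Sum>\<alpha>\<in>Sf. df \<alpha> * monomial_fun \<alpha> x)"
    using assms(1) unfolding poly_fun_deg_le_iff by blast
  obtain Sg dg where g: "finite Sg" "\<forall>\<alpha>\<in>Sg. (\<Sum>i\<in>UNIV. \<alpha> i) \<le> b"
    "g = (\<lambda>x. \<Sum>\<alpha>\<in>Sg. dg \<alpha> * monomial_fun \<alpha> x)"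
    using assms(2) unfolding poly_fun_deg_le_iff by blast
  have eq: "(\<lambda>x. f x * g x) =
      (\<lambda>x. \<Sum>\<alpha>\<in>Sf. \<Sum>\<beta>\<in>Sg. (df \<alpha> * dg \<beta>) * monomial_fun (\<lambda>i. \<alpha> i + \<beta> i) x)"
    by (auto simp: f(3) g(3) sum_product monomial_fun_add mult_ac intro!: sum.cong)
  have "(\<Sum>i\<in>UNIV. \<alpha> i + \<beta> i) \<le> a + b" if "\<alpha> \<in> Sf" "\<beta> \<in> Sg" for \<alpha> \<beta>
    using f(2) g(2) that by (simp add: sum.distrib add_mono)
  then show ?thesis
    unfolding eq using f(1) g(1)
    by (intro poly_fun_deg_le_sum ballI poly_fun_deg_le_monomial) auto
qed

lemma poly_fun_deg_le_prod:
  assumes "finite I" "\<forall>i\<in>I. poly_fun_deg_le 1 (f i)"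
  shows "poly_fun_deg_le (card I) (\<lambda>x. \<Prod>i\<in>I. f i x)"
  using assms
proof (induction I rule: finite_induct)
  case empty
  then show ?case by (simp add: poly_fun_deg_le_const)
next
  case (insert a F)
  then show ?case using poly_fun_deg_le_mult[of 1 "f a" "card F" "\<lambda>x. \<Prod>i\<in>F. f i x"] by simp
qed

lemma poly_fun_deg_le_affine: "poly_fun_deg_le 1 (\<lambda>x::real^'n. a + c \<bullet> x)"
proof -
  have "poly_fun_deg_le 1 (\<lambda>x::real^'n. a + (\<Sum>i\<in>UNIV. c $ i * x $ i))"
    by (intro poly_fun_deg_le_add poly_fun_deg_le_const poly_fun_deg_le_sum ballI
        poly_fun_deg_le_cmult poly_fun_deg_le_coord) simp
  then show ?thesis by (simp add: inner_vec_def)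
qed

definition indicator_poly :: "(real^'n::finite) set \<Rightarrow> real^'n \<Rightarrow> real^'n \<Rightarrow> real" where
  "indicator_poly V w x = (\<Prod>u\<in>V - {w}. ((w - u) \<bullet> (x - u)) / ((w - u) \<bullet> (w - u)))"

lemma poly_fun_deg_le_indicator_poly:
  assumes "finite V"
  shows "poly_fun_deg_le (card V) (indicator_poly V w)"
proof -
  have "poly_fun_deg_le 1 (\<lambda>x. ((w - u) \<bullet> (x - u)) / ((w - u) \<bullet> (w - u)))" for u
  proof -
    have "(\<lambda>x. ((w - u) \<bullet> (x - u)) / ((w - u) \<bullet> (w - u))) =
          (\<lambda>x. - ((w - u) \<bullet> u) / ((w - u) \<bullet> (w - u)) + ((1 / ((w - u) \<bullet> (w - u))) *\<^sub>R (w - u)) \<bullet> x)"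
      by (auto simp: inner_diff_right diff_divide_distrib)
    then show ?thesis by (simp only: poly_fun_deg_le_affine)
  qed
  then have "poly_fun_deg_le (card (V - {w})) (indicator_poly V w)"
    unfolding indicator_poly_def using assms by (intro poly_fun_deg_le_prod) auto
  then show ?thesis
    by (rule poly_fun_deg_le_mono[rotated]) (simp add: assms card_mono)
qed

lemma indicator_poly_eq:
  assumes "finite V" "v \<in> V"
  shows "indicator_poly V w v = (if v = w then 1 else 0)"
proof (cases "v = w")
  case True
  then have "indicator_poly V w v = (\<Prod>u\<in>V - {w}. 1)"
    unfolding indicator_poly_def by (intro prod.cong) auto
  then show ?thesis using True by simp
next
  case False
  then have "indicator_poly V w v = 0"
    unfolding indicator_poly_def using assms False by (intro prod_zero bexI[of _ v]) auto
  then show ?thesis using False by simp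
qed

lemma k_sos_card:
  assumes "finite V" "nonneg_on V l"
  shows "k_sos (card V) V l"
proof -
  obtain ws where ws: "set ws = V" "distinct ws"
    using finite_distinct_list[OF assms(1)] by blast
  define hs where "hs = map (\<lambda>w x. sqrt (l w) * indicator_poly V w x) ws"
  have "\<forall>h\<in>set hs. poly_fun_deg_le (card V) h"
    unfolding hs_def
    using poly_fun_deg_le_cmult[OF poly_fun_deg_le_indicator_poly[OF assms(1)]] by auto
  moreover have "l v = (\<Sum>h\<leftarrow>hs. (h v)\<^sup>2)" if v: "v \<in> V" for v
  proof -
    have "(\<Sum>h\<leftarrow>hs. (h v)\<^sup>2) = (\<Sum>w\<in>V. (sqrt (l w) * indicator_poly V w v)\<^sup>2)"
      using ws by (simp add: hs_def o_def sum_list_distinct_conv_sum_set)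
    also have "\<dots> = (\<Sum>w\<in>V. if v = w then l w else 0)"
      using assms v by (intro sum.cong) (auto simp: indicator_poly_eq power_mult_distrib nonneg_on_def)
    also have "\<dots> = l v"
      using v assms(1) by simp
    finally show ?thesis by simp
  qed
  ultimately show ?thesis
    unfolding k_sos_def by blast
qed

lemma k_sos_theta_rank:
  assumes "finite V" "nonneg_on V (lin_fun \<delta> c)"
  shows "k_sos (theta_rank V) V (lin_fun \<delta> c)"
proof -
  let ?P = "\<lambda>k. \<forall>\<delta> c. nonneg_on V (lin_fun \<delta> c) \<longrightarrow> k_sos k V (lin_fun \<delta> c)"
  have "?P (card V)"
    using k_sos_card[OF assms(1)] by blast
  then have "?P (theta_rank V)"
    unfolding theta_rank_def by (rule LeastI)
  then show ?thesis
    using assms(2) by blast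
qed

lemma k_sos_subset:
  assumes "k_sos k V l" "W \<subseteq> V" "\<forall>w\<in>W. l' w = l w"
  shows "k_sos k W l'"
  using assms unfolding k_sos_def by (metis subsetD)

lemma k_level_levelness:
  assumes "finite V"
  shows "k_level (levelness V) V"
proof -
  have "k_level (card V) V"
    unfolding k_level_def using assms by (simp add: card_image_le)
  then show ?thesis
    unfolding levelness_def by (rule LeastI)
qed

lemma lin_fun_add_scaled: "lin_fun a c x + t * lin_fun b d x = lin_fun (a + t * b) (c + t *\<^sub>R d) x"
  by (simp add: lin_fun_def inner_add_left algebra_simps)

lemma lin_fun_diff_scaled: "lin_fun a c x - t * lin_fun b d x = lin_fun (a - t * b) (c - t *\<^sub>R d) x"
  by (simp add: lin_fun_def inner_diff_left algebra_simps)

lemma face_of_config_subset: "face_of_config V F \<Longrightarrow> F \<subseteq> V"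
  unfolding face_of_config_def by auto

lemma face_of_config_inter:
  assumes "face_of_config V G" "W \<subseteq> V"
  shows "face_of_config W (G \<inter> W)"
  using assms unfolding face_of_config_def nonneg_on_def by blast

lemma ex_multiplier_dominates:
  fixes g l :: "'a \<Rightarrow> real"
  assumes "finite V"
  shows "\<exists>M. \<forall>v\<in>V. g v > 0 \<longrightarrow> l v + M * g v > 0"
proof -
  define P where "P = {v\<in>V. g v > 0}"
  define M where "M = (\<Sum>v\<in>P. (\<bar>l v\<bar> + 1) / g v)"
  have "finite P" using assms by (simp add: P_def)
  have "l v + M * g v > 0" if "v \<in> P" for v
  proof -
    have "(\<bar>l v\<bar> + 1) / g v \<le> M"
      unfolding M_def using that \<open>finite P\<close> by (intro member_le_sum) (auto simp: P_def)
    then have "\<bar>l v\<bar> + 1 \<le> M * g v"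
      using that by (simp add: P_def pos_divide_le_eq)
    then show ?thesis by linarith
  qed
  then show ?thesis
    unfolding P_def by blast
qed

lemma nonneg_lin_fun_extend_from_face:
  fixes V W :: "(real^'n) set"
  assumes "finite V" "face_of_config V W" "nonneg_on W (lin_fun \<delta>' c')"
  obtains \<delta>2 c2 where "nonneg_on V (lin_fun \<delta>2 c2)"
    and "\<forall>w\<in>W. lin_fun \<delta>2 c2 w = lin_fun \<delta>' c' w"
    and "{v\<in>V. lin_fun \<delta>2 c2 v = 0} = {w\<in>W. lin_fun \<delta>' c' w = 0}"
proof -
  obtain \<delta> c where g: "nonneg_on V (lin_fun \<delta> c)" and W: "W = {v\<in>V. lin_fun \<delta> c v = 0}"
    using assms(2) unfolding face_of_config_def by blast
  obtain M where M: "\<forall>v\<in>V. lin_fun \<delta> c v > 0 \<longrightarrow> lin_fun \<delta>' c' v + M * lin_fun \<delta> c v > 0"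
    using ex_multiplier_dominates[OF assms(1)] by blast
  let ?l = "lin_fun (\<delta>' + M * \<delta>) (c' + M *\<^sub>R c)"
  have on_V: "v \<in> W \<and> ?l v = lin_fun \<delta>' c' v \<or> v \<notin> W \<and> ?l v > 0" if "v \<in> V" for v
    using that g M unfolding W nonneg_on_def by (force simp flip: lin_fun_add_scaled)
  show ?thesis
  proof (rule that)
    show "nonneg_on V ?l"
      using on_V assms(3) unfolding nonneg_on_def by fastforce
    show "\<forall>w\<in>W. ?l w = lin_fun \<delta>' c' w"
      using on_V W by blast
    show "{v\<in>V. ?l v = 0} = {w\<in>W. lin_fun \<delta>' c' w = 0}"
      using on_V W by fastforce
  qed
qed

theorem theta_rank_face_le:
  fixes V W :: "(real^'n) set"
  assumes "finite V" "face_of_config V W"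
  shows "theta_rank W \<le> theta_rank V"
  unfolding theta_rank_def[of W]
proof (rule Least_le, intro allI impI)
  fix \<delta>' c' assume "nonneg_on W (lin_fun \<delta>' c')"
  then obtain \<delta>2 c2 where "nonneg_on V (lin_fun \<delta>2 c2)" "\<forall>w\<in>W. lin_fun \<delta>2 c2 w = lin_fun \<delta>' c' w"
    using nonneg_lin_fun_extend_from_face[OF assms] by metis
  then show "k_sos (theta_rank V) W (lin_fun \<delta>' c')"
    using k_sos_subset[OF k_sos_theta_rank[OF assms(1)]] face_of_config_subset[OF assms(2)] by metis
qed

text \<open>The tilt \<open>s\<close> is the least ratio of the two functions over the points where the second one
is positive.\<close>

lemma nonneg_lin_fun_tilt:
  fixes V :: "(real^'n) set"
  assumes "finite V" "nonneg_on V (lin_fun a c)" "nonneg_on V (lin_fun b d)"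
    and "\<exists>v\<in>V. lin_fun b d v > 0"
  obtains s v0 where "v0 \<in> V" "lin_fun b d v0 > 0"
    and "nonneg_on V (lin_fun (a - s * b) (c - s *\<^sub>R d))"
    and "lin_fun (a - s * b) (c - s *\<^sub>R d) v0 = 0"
proof -
  let ?l = "lin_fun a c" and ?m = "lin_fun b d"
  define A where "A = {v\<in>V. ?m v > 0}"
  have A: "finite A" "A \<noteq> {}"
    using assms(1,4) by (auto simp: A_def)
  define v0 where "v0 = arg_min_on (\<lambda>v. ?l v / ?m v) A"
  define s where "s = ?l v0 / ?m v0"
  have v0: "v0 \<in> A"
    unfolding v0_def using arg_min_if_finite(1)[OF A] .
  have "s * ?m v \<le> ?l v" if "v \<in> V" for v
  proof (cases "v \<in> A")
    case True
    then have "s \<le> ?l v / ?m v"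
      unfolding s_def v0_def by (rule arg_min_least[OF A])
    then show ?thesis
      using True by (simp add: A_def pos_le_divide_eq)
  next
    case False
    then have "?m v = 0"
      using that assms(3) by (force simp: A_def nonneg_on_def)
    then show ?thesis
      using that assms(2) by (simp add: nonneg_on_def)
  qed
  moreover have "s * ?m v0 = ?l v0"
    using v0 by (simp add: s_def A_def)
  ultimately show ?thesis
    using v0 by (intro that[of v0 s]) (auto simp: A_def nonneg_on_def simp flip: lin_fun_diff_scaled)
qed

lemma facet_lin_funs_proportional:
  fixes W :: "(real^'n) set"
  assumes "finite W" "facet_of_config W F"
    and "nonneg_on W (lin_fun a1 c1)" "{w\<in>W. lin_fun a1 c1 w = 0} = F"
    and "nonneg_on W (lin_fun a2 c2)" "{w\<in>W. lin_fun a2 c2 w = 0} = F"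
  shows "\<exists>s>0. \<forall>w\<in>W. lin_fun a2 c2 w = s * lin_fun a1 c1 w"
proof -
  have "F \<noteq> W"
    using assms(2) unfolding facet_of_config_def by blast
  then have "\<exists>w\<in>W. lin_fun a1 c1 w > 0"
    using assms(3,4) unfolding nonneg_on_def by force
  then obtain s v0 where v0: "v0 \<in> W" "lin_fun a1 c1 v0 > 0"
    and nonneg: "nonneg_on W (lin_fun (a2 - s * a1) (c2 - s *\<^sub>R c1))"
    and zero: "lin_fun (a2 - s * a1) (c2 - s *\<^sub>R c1) v0 = 0"
    using nonneg_lin_fun_tilt[OF assms(1,5,3)] by metis
  define G where "G = {w\<in>W. lin_fun (a2 - s * a1) (c2 - s *\<^sub>R c1) w = 0}"
  have "face_of_config W G"
    unfolding face_of_config_def G_def using nonneg by blast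
  moreover have "F \<subseteq> G" "v0 \<in> G - F"
    using assms(4,6) v0 zero by (auto simp: G_def simp flip: lin_fun_diff_scaled)
  ultimately have "G = W"
    using assms(2) unfolding facet_of_config_def by blast
  moreover have "s > 0"
  proof -
    have "lin_fun a2 c2 v0 > 0"
      using v0(1) \<open>v0 \<in> G - F\<close> assms(5,6) unfolding nonneg_on_def by force
    moreover have "lin_fun a2 c2 v0 = s * lin_fun a1 c1 v0"
      using zero by (simp flip: lin_fun_diff_scaled)
    ultimately show ?thesis
      using v0(2) by (simp add: zero_less_mult_iff)
  qed
  ultimately show ?thesis
    unfolding G_def by (auto simp flip: lin_fun_diff_scaled)
qed

lemma face_of_config_beyond:
  fixes V :: "(real^'n) set"
  assumes "finite V" "face_of_config V G" "face_of_config V G'" "G \<subseteq> G'" "G' \<noteq> V"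
  obtains G'' where "face_of_config V G''" "G'' \<inter> G' = G" "\<not> G'' \<subseteq> G'"
proof -
  obtain a c where l: "nonneg_on V (lin_fun a c)" "G = {v\<in>V. lin_fun a c v = 0}"
    using assms(2) unfolding face_of_config_def by blast
  obtain b d where m: "nonneg_on V (lin_fun b d)" "G' = {v\<in>V. lin_fun b d v = 0}"
    using assms(3) unfolding face_of_config_def by blast
  have "\<exists>v\<in>V. lin_fun b d v > 0"
    using assms(5) m unfolding nonneg_on_def by force
  then obtain s v0 where v0: "v0 \<in> V" "lin_fun b d v0 > 0"
    and nonneg: "nonneg_on V (lin_fun (a - s * b) (c - s *\<^sub>R d))"
    and zero: "lin_fun (a - s * b) (c - s *\<^sub>R d) v0 = 0"
    using nonneg_lin_fun_tilt[OF assms(1) l(1) m(1)] by metis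
  define G'' where "G'' = {v\<in>V. lin_fun (a - s * b) (c - s *\<^sub>R d) v = 0}"
  have "face_of_config V G''"
    unfolding face_of_config_def G''_def using nonneg by blast
  moreover have "G'' \<inter> G' = G"
    using assms(4) l(2) m(2) by (auto simp: G''_def simp flip: lin_fun_diff_scaled)
  moreover have "v0 \<in> G'' - G'"
    using v0 zero m(2) by (simp add: G''_def)
  ultimately show ?thesis
    using that by blast
qed

lemma facet_of_face_extends:
  fixes V W :: "(real^'n) set"
  assumes "finite V" "face_of_config V W" "facet_of_config W F"
  obtains G where "facet_of_config V G" "G \<inter> W = F"
proof -
  have WV: "W \<subseteq> V"
    using face_of_config_subset[OF assms(2)] .
  have F: "face_of_config W F" "F \<noteq> W" "F \<subseteq> W"
    and F_max: "\<And>G. face_of_config W G \<Longrightarrow> G \<noteq> W \<Longrightarrow> F \<subseteq> G \<Longrightarrow> G = F"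
    using assms(3) face_of_config_subset unfolding facet_of_config_def by blast+
  define Fam where "Fam = {G. face_of_config V G \<and> G \<inter> W = F}"
  have "finite Fam"
    by (rule finite_subset[of _ "Pow V"]) (use face_of_config_subset assms(1) in \<open>auto simp: Fam_def\<close>)
  have "F \<in> Fam"
  proof -
    obtain \<delta> c where l: "nonneg_on W (lin_fun \<delta> c)" "F = {w\<in>W. lin_fun \<delta> c w = 0}"
      using F(1) unfolding face_of_config_def by blast
    obtain \<delta>2 c2 where l2: "nonneg_on V (lin_fun \<delta>2 c2)"
      "\<forall>w\<in>W. lin_fun \<delta>2 c2 w = lin_fun \<delta> c w"
      "{v\<in>V. lin_fun \<delta>2 c2 v = 0} = {w\<in>W. lin_fun \<delta> c w = 0}"
      by (rule nonneg_lin_fun_extend_from_face[OF assms(1,2) l(1)])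
    have "face_of_config V F"
      unfolding face_of_config_def l(2) using l2(1) l2(3)[symmetric] by blast
    then show ?thesis
      using F(3) unfolding Fam_def by blast
  qed
  then obtain G where "G \<in> Fam" "\<forall>G'\<in>Fam. G \<subseteq> G' \<longrightarrow> G' = G"
    using finite_has_maximal[OF \<open>finite Fam\<close>] by blast
  then have G: "face_of_config V G" "G \<inter> W = F"
    and G_max: "\<And>G'. G' \<in> Fam \<Longrightarrow> G \<subseteq> G' \<Longrightarrow> G' = G"
    unfolding Fam_def by blast+
  have "G' = G" if G': "face_of_config V G'" "G' \<noteq> V" "G \<subseteq> G'" for G'
  proof (cases "W \<subseteq> G'")
    case True
    obtain G'' where G'': "face_of_config V G''" "G'' \<inter> G' = G" "\<not> G'' \<subseteq> G'"
      using face_of_config_beyond[OF assms(1) G(1) G'(1,3,2)] .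
    have "G'' \<inter> W = F"
      using G''(2) G(2) True by blast
    then have "G'' = G"
      using G_max G'' unfolding Fam_def by blast
    then show ?thesis
      using G''(2,3) by blast
  next
    case False
    have "G' \<inter> W = F"
      using F_max[OF face_of_config_inter[OF G'(1) WV]] False G(2) G'(3) by blast
    then show ?thesis
      using G_max G'(1,3) unfolding Fam_def by blast
  qed
  moreover have "G \<noteq> V"
    using G(2) F(2) WV by blast
  ultimately show ?thesis
    using G that unfolding facet_of_config_def by blast
qed

theorem levelness_face_le:
  fixes V W :: "(real^'n) set"
  assumes "finite V" "face_of_config V W"
  shows "levelness W \<le> levelness V"
  unfolding levelness_def[of W] k_level_def
proof (rule Least_le, intro allI impI)
  fix \<delta> c assume "facet_defining W \<delta> c"
  then have l: "nonneg_on W (lin_fun \<delta> c)" "facet_of_config W {w\<in>W. lin_fun \<delta> c w = 0}"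
    unfolding facet_defining_def by blast+
  have WV: "W \<subseteq> V"
    using face_of_config_subset[OF assms(2)] .
  then have "finite W"
    using assms(1) finite_subset by blast
  obtain G where G: "facet_of_config V G" "G \<inter> W = {w\<in>W. lin_fun \<delta> c w = 0}"
    using facet_of_face_extends[OF assms l(2)] .
  then obtain a d where ad: "nonneg_on V (lin_fun a d)" "G = {v\<in>V. lin_fun a d v = 0}"
    unfolding facet_of_config_def face_of_config_def by blast
  have "nonneg_on W (lin_fun a d)" "{w\<in>W. lin_fun a d w = 0} = {w\<in>W. lin_fun \<delta> c w = 0}"
    using ad G(2) WV unfolding nonneg_on_def by auto
  then obtain s where s: "s > 0" "\<forall>w\<in>W. lin_fun a d w = s * lin_fun \<delta> c w"
    using facet_lin_funs_proportional[OF \<open>finite W\<close> l(2) l(1)] by blast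
  then have "lin_fun a d ` W = (\<lambda>y. s * y) ` lin_fun \<delta> c ` W"
    by (auto simp: image_image)
  then have "card (lin_fun \<delta> c ` W) = card (lin_fun a d ` W)"
    using s(1) by (simp add: card_image inj_on_def)
  also have "\<dots> \<le> card (lin_fun a d ` V)"
    using assms(1) WV by (intro card_mono) auto
  also have "\<dots> \<le> levelness V"
    using k_level_levelness[OF assms(1)] ad G(1) unfolding k_level_def facet_defining_def by blast
  finally show "card (lin_fun \<delta> c ` W) \<le> levelness V" .
qed

theorem lemma2p3:
  fixes V :: "(real^'n) set" and k :: nat and \<delta> :: real and c :: "real^'n"
  assumes "finite V"
    and "c \<noteq> 0"
    and "nonneg_on V (lin_fun \<delta> c)"
  shows "(theta_rank V \<le> k \<longrightarrow> theta_rank (V \<inter> {x. lin_fun \<delta> c x = 0}) \<le> k)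
       \<and> (levelness V \<le> k \<longrightarrow> levelness (V \<inter> {x. lin_fun \<delta> c x = 0}) \<le> k)"
proof -
  have "face_of_config V (V \<inter> {x. lin_fun \<delta> c x = 0})"
    unfolding face_of_config_def using assms(3) by blast
  then show ?thesis
    using theta_rank_face_le levelness_face_le assms(1) le_trans by blast
qed

end
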